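(* Let $L\ge 2$ be an integer, $\delta>0$, and let $\mathscr A_{L,\delta}:=\{(2j-L-1)\delta: j=1,\dots,L\}$ (the arithmetic progression of length $L$, spacing $2\delta$, symmetric about $0$). Let $H=I-\tilde H$ be an $m\times m$ matrix where $\tilde H$ is strictly lower triangular, and let $\mu\ge0$ satisfy $\|\tilde H\|_{\infty\to\infty}+\mu/\delta\le L$. Then there exists a map $Q:[-\mu,\mu]^m\to\mathscr A_{L,\delta}^m$ (computable by a recursive algorithm that determines $q_n$ from $y_1,\dots,y_n$ and $q_1,\dots,q_{n-1}$) such that for every $y\in[-\mu,\mu]^m$, with $q:=Q(y)$, the vector $u:=H^{-1}(y-q)$ satisfies $y-q=Hu$ and $\|u\|_\infty\le\delta$.
   Context: $\|A\|_{\infty\to\infty}$ denotes the operator norm of $A$ from $\ell^\infty$ to $\ell^\infty$ (maximum absolute row sum). Since $H$ is lower triangular with unit diagonal, it is invertible. *)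

theory Defs
  imports Complex_Main
begin

text \<open>Vectors in R^m are functions nat => real (only indices i < m matter);
  m x m matrices are functions nat => nat => real (only indices i, j < m matter).
  Index 0 corresponds to the paper's index 1.\<close>

definition alphabet :: "nat \<Rightarrow> real \<Rightarrow> real set" where
  "alphabet L \<delta> = {(2 * real j - real L - 1) * \<delta> | j. 1 \<le> j \<and> j \<le> L}"

definition strictly_lower :: "nat \<Rightarrow> (nat \<Rightarrow> nat \<Rightarrow> real) \<Rightarrow> bool" where
  "strictly_lower m A \<longleftrightarrow> (\<forall>i<m. \<forall>j<m. i \<le> j \<longrightarrow> A i j = 0)"

text \<open>Operator norm l^infty -> l^infty: maximum absolute row sum (0 for m = 0).\<close>
definition inf_inf_norm :: "nat \<Rightarrow> (nat \<Rightarrow> nat \<Rightarrow> real) \<Rightarrow> real" where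
  "inf_inf_norm m A = Max (insert 0 {(\<Sum>j<m. \<bar>A i j\<bar>) | i. i < m})"

definition H_mult :: "nat \<Rightarrow> (nat \<Rightarrow> nat \<Rightarrow> real) \<Rightarrow> (nat \<Rightarrow> real) \<Rightarrow> nat \<Rightarrow> real" where
  "H_mult m Ht u i = u i - (\<Sum>j<m. Ht i j * u j)"

end

theory Submission
  imports Defs
begin

(* Proof idea (greedy first-order sigma-delta quantization).
   Write u := H^{-1}(y - q), i.e. u n = y n - q n + (\<Sum>j<n. Ht n j * u j).  Because Ht is
   strictly lower triangular, u can be computed one coordinate at a time: the value
   v n := y n + (\<Sum>j<n. Ht n j * u j) only involves earlier coordinates, and choosing
   q n as the point of the alphabet nearest to v n gives u n = v n - q n.
   1. The quantizer: rounding to the nearest of the L levels (2k - L - 1) * \<delta> has error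
      at most \<delta> on the interval [-L*\<delta>, L*\<delta>].
   2. The recursion defining u, its causality (u n depends only on y 0, ..., y n) and the
      identity y - q = H u, which uses only that Ht is strictly lower triangular.
   3. Stability: by strong induction, if |u j| \<le> \<delta> for j < n then
      |v n| \<le> \<mu> + \<parallel>Ht\<parallel>\<delta> \<le> L\<delta>, so the rounding error u n is again at most \<delta>. *)

text \<open>Index in 1..L of the level (2k - L - 1) nearest to x (levels have spacing 2).\<close>
definition level_index :: "nat \<Rightarrow> real \<Rightarrow> int" where
  "level_index L x = max 1 (min (int L) \<lceil>(x + real L) / 2\<rceil>)"

definition quantize :: "nat \<Rightarrow> real \<Rightarrow> real \<Rightarrow> real" where
  "quantize L \<delta> v = (2 * of_int (level_index L (v / \<delta>)) - real L - 1) * \<delta>"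

lemma quantize_in_alphabet:
  assumes "L \<ge> 1"
  shows "quantize L \<delta> v \<in> alphabet L \<delta>"
proof -
  define k where "k = level_index L (v / \<delta>)"
  have "1 \<le> k" "k \<le> int L" using assms by (auto simp: k_def level_index_def)
  then show ?thesis
    unfolding alphabet_def quantize_def k_def[symmetric]
    by (intro CollectI exI[of _ "nat k"]) auto
qed

lemma level_index_error:
  assumes x: "\<bar>x\<bar> \<le> real L" and L: "L \<ge> 1"
  shows "\<bar>x - (2 * of_int (level_index L x) - real L - 1)\<bar> \<le> 1"
proof -
  define t where "t = (x + real L) / 2"
  define c where "c = \<lceil>t\<rceil>"
  have t_range: "0 \<le> t" "t \<le> real L" using x by (auto simp: t_def abs_le_iff)
  have c_bounds: "t \<le> c" "c < t + 1"
    unfolding c_def using ceiling_correct[of t] by linarith+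
  have c_le_L: "c \<le> int L"
    using ceiling_mono[OF t_range(2)] by (simp add: c_def)
  have x_eq: "x = 2 * t - real L" by (simp add: t_def field_simps)
  show ?thesis
  proof (cases "c = 0")
    case True
    then have "t = 0" "level_index L x = 1"
      using c_bounds t_range L by (auto simp: level_index_def c_def t_def)
    then show ?thesis by (simp add: x_eq)
  next
    case False
    then have "c \<ge> 1" using c_bounds t_range by linarith
    then have "level_index L x = c"
      using c_le_L by (simp add: level_index_def c_def t_def)
    then show ?thesis using c_bounds by (simp add: x_eq abs_le_iff)
  qed
qed

lemma quantize_error:
  assumes \<delta>: "\<delta> > 0" and v: "\<bar>v\<bar> \<le> real L * \<delta>" and L: "L \<ge> 1"
  shows "\<bar>v - quantize L \<delta> v\<bar> \<le> \<delta>"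
proof -
  define x where "x = v / \<delta>"
  have "\<bar>x\<bar> \<le> real L" using v \<delta> by (simp add: x_def abs_divide pos_divide_le_eq)
  from level_index_error[OF this L]
  have "\<bar>x - (2 * of_int (level_index L x) - real L - 1)\<bar> * \<delta> \<le> \<delta>"
    using \<delta> by (simp add: mult_le_cancel_right1)
  moreover have "v - quantize L \<delta> v = (x - (2 * of_int (level_index L x) - real L - 1)) * \<delta>"
    using \<delta> by (simp add: quantize_def x_def algebra_simps)
  ultimately show ?thesis using \<delta> by (simp add: abs_mult)
qed

lemma strictly_lower_row_sum:
  assumes "strictly_lower m A" and "i < m"
  shows "(\<Sum>j<m. A i j * f j) = (\<Sum>j<i. A i j * f j)"
  using assms by (intro sum.mono_neutral_right) (auto simp: strictly_lower_def)

lemma row_abs_sum_le_norm: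
  assumes "i < m"
  shows "(\<Sum>j<m. \<bar>A i j\<bar>) \<le> inf_inf_norm m A"
  unfolding inf_inf_norm_def using assms by (intro Max_ge) auto

lemma partial_row_bound:
  assumes "i < m" and "\<delta> \<ge> 0" and u: "\<forall>j<i. \<bar>u j\<bar> \<le> \<delta>"
  shows "\<bar>\<Sum>j<i. A i j * u j\<bar> \<le> inf_inf_norm m A * \<delta>"
proof -
  have "\<bar>\<Sum>j<i. A i j * u j\<bar> \<le> (\<Sum>j<i. \<bar>A i j\<bar> * \<delta>)"
    using u by (intro order.trans[OF sum_abs] sum_mono)
      (auto simp: abs_mult intro: mult_left_mono)
  also have "\<dots> \<le> (\<Sum>j<m. \<bar>A i j\<bar> * \<delta>)"
    using assms(1,2) by (intro sum_mono2) auto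
  also have "\<dots> \<le> inf_inf_norm m A * \<delta>"
    using row_abs_sum_le_norm[OF assms(1)] assms(2)
    by (simp add: sum_distrib_right[symmetric] mult_right_mono)
  finally show ?thesis .
qed

function sd_state :: "nat \<Rightarrow> real \<Rightarrow> (nat \<Rightarrow> nat \<Rightarrow> real) \<Rightarrow> (nat \<Rightarrow> real) \<Rightarrow> nat \<Rightarrow> real" where
  "sd_state L \<delta> Ht y n =
     (let v = y n + (\<Sum>j<n. Ht n j * sd_state L \<delta> Ht y j) in v - quantize L \<delta> v)"
  by auto
termination
  by (relation "measure (\<lambda>(_, _, _, _, n). n)") auto

declare sd_state.simps [simp del]

definition sd_input :: "nat \<Rightarrow> real \<Rightarrow> (nat \<Rightarrow> nat \<Rightarrow> real) \<Rightarrow> (nat \<Rightarrow> real) \<Rightarrow> nat \<Rightarrow> real" where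
  "sd_input L \<delta> Ht y n = y n + (\<Sum>j<n. Ht n j * sd_state L \<delta> Ht y j)"

definition sd_output :: "nat \<Rightarrow> real \<Rightarrow> (nat \<Rightarrow> nat \<Rightarrow> real) \<Rightarrow> (nat \<Rightarrow> real) \<Rightarrow> nat \<Rightarrow> real" where
  "sd_output L \<delta> Ht y n = quantize L \<delta> (sd_input L \<delta> Ht y n)"

lemma sd_state_eq: "sd_state L \<delta> Ht y n = sd_input L \<delta> Ht y n - sd_output L \<delta> Ht y n"
  by (subst sd_state.simps) (simp add: sd_input_def sd_output_def Let_def)

lemma sd_input_causal:
  "(\<forall>i\<le>n. y i = y' i) \<Longrightarrow> sd_input L \<delta> Ht y n = sd_input L \<delta> Ht y' n"
proof (induction n rule: less_induct)
  case (less n)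
  have "sd_state L \<delta> Ht y j = sd_state L \<delta> Ht y' j" if "j < n" for j
    using less.IH[OF that] less.prems that by (simp add: sd_state_eq sd_output_def)
  then show ?case
    using less.prems by (simp add: sd_input_def)
qed

lemma sd_output_causal:
  assumes "\<forall>i\<le>n. y i = y' i"
  shows "sd_output L \<delta> Ht y n = sd_output L \<delta> Ht y' n"
  unfolding sd_output_def using sd_input_causal[OF assms] by simp

lemma sd_noise_shaping:
  assumes "strictly_lower m Ht" and "i < m"
  shows "y i - sd_output L \<delta> Ht y i = H_mult m Ht (sd_state L \<delta> Ht y) i"
  using sd_state_eq[of L \<delta> Ht y i]
  by (simp add: H_mult_def strictly_lower_row_sum[OF assms] sd_input_def)

text \<open>Stability: under \<parallel>Ht\<parallel> + \<mu>/\<delta> \<le> L the quantizer input stays in [-L\<delta>, L\<delta>],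
  so every state is bounded by \<delta>.\<close>
lemma sd_state_bounded:
  assumes L: "L \<ge> 1" and \<delta>: "\<delta> > 0"
    and norm: "inf_inf_norm m Ht + \<mu> / \<delta> \<le> real L"
    and y: "\<forall>i<m. \<bar>y i\<bar> \<le> \<mu>"
  shows "i < m \<Longrightarrow> \<bar>sd_state L \<delta> Ht y i\<bar> \<le> \<delta>"
proof (induction i rule: less_induct)
  case (less i)
  have "\<forall>j<i. \<bar>sd_state L \<delta> Ht y j\<bar> \<le> \<delta>"
    using less by simp
  then have "\<bar>\<Sum>j<i. Ht i j * sd_state L \<delta> Ht y j\<bar> \<le> inf_inf_norm m Ht * \<delta>"
    using partial_row_bound less.prems \<delta> by simp
  moreover have "\<bar>y i\<bar> \<le> \<mu>" using y less.prems by simp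
  ultimately have "\<bar>sd_input L \<delta> Ht y i\<bar> \<le> \<mu> + inf_inf_norm m Ht * \<delta>"
    unfolding sd_input_def by linarith
  also have "\<dots> = (inf_inf_norm m Ht + \<mu> / \<delta>) * \<delta>"
    using \<delta> by (simp add: distrib_right)
  also have "\<dots> \<le> real L * \<delta>"
    using norm \<delta> by (intro mult_right_mono) auto
  finally show ?case
    unfolding sd_state_eq sd_output_def by (rule quantize_error[OF \<delta> _ L])
qed

theorem proposition1:
  fixes L m :: nat and \<delta> \<mu> :: real and Ht :: "nat \<Rightarrow> nat \<Rightarrow> real"
  assumes "L \<ge> 2" and "\<delta> > 0" and "\<mu> \<ge> 0"
    and "strictly_lower m Ht"
    and "inf_inf_norm m Ht + \<mu> / \<delta> \<le> real L"
  shows "\<exists>Q :: (nat \<Rightarrow> real) \<Rightarrow> nat \<Rightarrow> real.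
    (\<forall>y y' n. (\<forall>i<m. \<bar>y i\<bar> \<le> \<mu>) \<longrightarrow> (\<forall>i<m. \<bar>y' i\<bar> \<le> \<mu>) \<longrightarrow> n < m \<longrightarrow>
        (\<forall>i\<le>n. y i = y' i) \<longrightarrow> Q y n = Q y' n) \<and>
    (\<forall>y. (\<forall>i<m. \<bar>y i\<bar> \<le> \<mu>) \<longrightarrow>
        (\<forall>i<m. Q y i \<in> alphabet L \<delta>) \<and>
        (\<exists>u :: nat \<Rightarrow> real. (\<forall>i<m. y i - Q y i = H_mult m Ht u i) \<and> (\<forall>i<m. \<bar>u i\<bar> \<le> \<delta>)))"
proof -
  have L: "L \<ge> 1" using assms(1) by simp
  let ?Q = "sd_output L \<delta> Ht" and ?P = "\<lambda>y. \<forall>i<m. \<bar>y i\<bar> \<le> \<mu>"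
  have causal: "\<forall>y y' n. ?P y \<longrightarrow> ?P y' \<longrightarrow> n < m \<longrightarrow> (\<forall>i\<le>n. y i = y' i) \<longrightarrow> ?Q y n = ?Q y' n"
    using sd_output_causal by blast
  have quantized: "\<forall>y. ?P y \<longrightarrow> (\<forall>i<m. ?Q y i \<in> alphabet L \<delta>) \<and>
      (\<exists>u. (\<forall>i<m. y i - ?Q y i = H_mult m Ht u i) \<and> (\<forall>i<m. \<bar>u i\<bar> \<le> \<delta>))"
  proof (intro allI impI)
    fix y assume y: "?P y"
    show "(\<forall>i<m. ?Q y i \<in> alphabet L \<delta>) \<and>
      (\<exists>u. (\<forall>i<m. y i - ?Q y i = H_mult m Ht u i) \<and> (\<forall>i<m. \<bar>u i\<bar> \<le> \<delta>))"
    proof (intro conjI exI[of _ "sd_state L \<delta> Ht y"] allI impI)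
      fix i assume "i < m"
      show "?Q y i \<in> alphabet L \<delta>"
        using quantize_in_alphabet[OF L] by (simp add: sd_output_def)
      show "y i - ?Q y i = H_mult m Ht (sd_state L \<delta> Ht y) i"
        using sd_noise_shaping[OF assms(4) \<open>i < m\<close>] .
      show "\<bar>sd_state L \<delta> Ht y i\<bar> \<le> \<delta>"
        using sd_state_bounded[OF L assms(2,5) y \<open>i < m\<close>] .
    qed
  qed
  show ?thesis
    using causal quantized by (intro exI[of _ ?Q] conjI)
qed

end
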